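(* Let $\ell,m,n$ be positive integers with $\ell<n$, $m<n$, $\gcd(m,n)=1$, let $k\in\mathbb{Z}^+$ and $\chi\in\mathbb{Z}$ with $|\chi|<k$, and put $\tilde\ell=\ell_k^\pm+\chi$. Then $$\tilde\ell\,d_k^\pm\bmod n_k^\pm=\big((\ell d\bmod n)\pm\chi n\big)\bmod n_k^\pm,$$ with the same choice of sign throughout.
   Context: $d\in\{1,\dots,n-1\}$ is the inverse of $m$ mod $n$. The left and right Farey roots of $\frac mn$ are the fractions $\frac{m^-}{n^-}<\frac{m^+}{n^+}$ with $m^\pm\ge0$, $n^\pm\ge1$, $m^-+m^+=m$, $n^-+n^+=n$, $m^+n^--m^-n^+=1$. Put $\ell^+=\lceil\ell n^+/n\rceil$, $\ell^-=\lfloor\ell n^-/n\rfloor$, $\ell_k^\pm=k\ell+\ell^\pm$, $m_k^\pm=km+m^\pm$, $n_k^\pm=kn+n^\pm$, and let $d_k^\pm$ be the multiplicative inverse of $m_k^\pm$ modulo $n_k^\pm$. *)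

theory Defs
  imports Complex_Main "HOL-Number_Theory.Cong"
begin

text \<open>Left Farey root mm/nm and right Farey root mp/np of m/n.\<close>
definition farey_roots :: "int \<Rightarrow> int \<Rightarrow> int \<Rightarrow> int \<Rightarrow> int \<Rightarrow> int \<Rightarrow> bool" where
  "farey_roots m n mm nm mp np \<longleftrightarrow>
     mm \<ge> 0 \<and> mp \<ge> 0 \<and> nm \<ge> 1 \<and> np \<ge> 1 \<and> mm + mp = m \<and> nm + np = n \<and>
     mp * nm - mm * np = 1 \<and>
     real_of_int mm / real_of_int nm < real_of_int mp / real_of_int np"

definition is_inv_mod :: "int \<Rightarrow> int \<Rightarrow> int \<Rightarrow> bool" where
  "is_inv_mod a n b \<longleftrightarrow> b \<in> {1..n-1} \<and> [a * b = 1] (mod n)"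

end

theory Submission
  imports Defs
begin

text \<open>Put \<open>r = l d mod n\<close>, so \<open>r m = l + t n\<close> for some \<open>t\<close>. The Farey determinants
  \<open>n m\<^sup>+ - m n\<^sup>+ = 1 = m n\<^sup>- - n m\<^sup>-\<close> give \<open>l n\<^sup>+ = (r m\<^sup>+ - t n\<^sup>+) n - r\<close> and
  \<open>l n\<^sup>- = (r m\<^sup>- - t n\<^sup>-) n + r\<close>; as \<open>0 \<le> r < n\<close>, this identifies \<open>l\<^sup>\<plusminus>\<close>. Then
  \<open>\<tilde>l = (r \<plusminus> \<chi> n) m\<^sub>k\<^sup>\<plusminus> - (t \<plusminus> \<chi> m) n\<^sub>k\<^sup>\<plusminus>\<close>, and multiplying by \<open>d\<^sub>k\<^sup>\<plusminus>\<close> modulo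
  \<open>n\<^sub>k\<^sup>\<plusminus>\<close> leaves \<open>r \<plusminus> \<chi> n\<close>. This works for every integer \<open>\<chi>\<close>.\<close>

lemma div_eq_of_decomposition:
  fixes a q r n :: int
  assumes "a = q * n + r" "0 \<le> r" "r < n"
  shows "a div n = q"
  using assms by (simp add: div_pos_pos_trivial)

lemma floor_divide_of_decomposition:
  fixes a q r n :: int
  assumes "a = q * n + r" "0 \<le> r" "r < n"
  shows "\<lfloor>real_of_int a / real_of_int n\<rfloor> = q"
  using div_eq_of_decomposition[OF assms] by (simp add: floor_divide_of_int_eq)

lemma ceiling_divide_of_decomposition:
  fixes a q r n :: int
  assumes "a = q * n - r" "0 \<le> r" "r < n"
  shows "\<lceil>real_of_int a / real_of_int n\<rceil> = q"
proof -
  have "- a = (- q) * n + r" using assms(1) by simp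
  from div_eq_of_decomposition[OF this assms(2,3)] show ?thesis
    by (simp add: ceiling_divide_eq_div)
qed

lemma mult_inverse_mod_of_combination:
  fixes a x b c u N :: int
  assumes "a = x * b + c * N" "[b * u = 1] (mod N)"
  shows "(a * u) mod N = x mod N"
proof -
  have "[a * u = x * (b * u) + (c * u) * N] (mod N)"
    using assms(1) by (simp add: algebra_simps)
  also have "[x * (b * u) + (c * u) * N = x * 1 + 0] (mod N)"
    using assms(2) by (intro cong_add cong_mult_self_right cong_mult[OF cong_refl])
  finally show ?thesis by (simp add: cong_def)
qed

lemma farey_roots_determinants:
  assumes "farey_roots m n mm nm mp np"
  shows "n * mp - m * np = 1" "m * nm - n * mm = 1"
  using assms by (auto simp: farey_roots_def algebra_simps)

lemma mod_mult_inverse_solves: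
  fixes l m n d :: int
  assumes "[m * d = 1] (mod n)"
  shows "[(l * d mod n) * m = l] (mod n)"
proof -
  have "[(l * d mod n) * m = l * (m * d)] (mod n)"
    unfolding cong_def mod_mult_left_eq by (simp add: ac_simps)
  also have "[l * (m * d) = l * 1] (mod n)"
    using assms by (intro cong_mult cong_refl)
  finally show ?thesis by simp
qed

lemma mult_inverse_mod_right_root:
  fixes k l m n mp np r t \<chi> u :: int
  assumes det: "n * mp - m * np = 1" and rt: "r * m = l + t * n"
    and "0 \<le> r" "r < n"
    and "[(k * m + mp) * u = 1] (mod (k * n + np))"
  shows "((k * l + \<lceil>real_of_int (l * np) / real_of_int n\<rceil> + \<chi>) * u) mod (k * n + np)
           = (r + \<chi> * n) mod (k * n + np)"
proof -
  have "l * np = (r * mp - t * np) * n - r"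
    using det rt by algebra
  then have "\<lceil>real_of_int (l * np) / real_of_int n\<rceil> = r * mp - t * np"
    using assms(3,4) by (rule ceiling_divide_of_decomposition)
  moreover have "k * l + (r * mp - t * np) + \<chi>
      = (r + \<chi> * n) * (k * m + mp) + (- (t + \<chi> * m)) * (k * n + np)"
    using det rt by algebra
  ultimately show ?thesis
    using mult_inverse_mod_of_combination assms(5) by simp
qed

lemma mult_inverse_mod_left_root:
  fixes k l m n mm nm r t \<chi> u :: int
  assumes det: "m * nm - n * mm = 1" and rt: "r * m = l + t * n"
    and "0 \<le> r" "r < n"
    and "[(k * m + mm) * u = 1] (mod (k * n + nm))"
  shows "((k * l + \<lfloor>real_of_int (l * nm) / real_of_int n\<rfloor> + \<chi>) * u) mod (k * n + nm)
           = (r - \<chi> * n) mod (k * n + nm)"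
proof -
  have "l * nm = (r * mm - t * nm) * n + r"
    using det rt by algebra
  then have "\<lfloor>real_of_int (l * nm) / real_of_int n\<rfloor> = r * mm - t * nm"
    using assms(3,4) by (rule floor_divide_of_decomposition)
  moreover have "k * l + (r * mm - t * nm) + \<chi>
      = (r - \<chi> * n) * (k * m + mm) + (- (t - \<chi> * m)) * (k * n + nm)"
    using det rt by algebra
  ultimately show ?thesis
    using mult_inverse_mod_of_combination assms(5) by simp
qed

theorem lemma3p6:
  fixes l m n k \<chi> d mm nm mp np dp dm :: int
  assumes "0 < l" "0 < m" "0 < n" "l < n" "m < n" "gcd m n = 1"
    and "0 < k" "\<bar>\<chi>\<bar> < k"
    and "is_inv_mod m n d"
    and "farey_roots m n mm nm mp np"
    and "is_inv_mod (k * m + mp) (k * n + np) dp"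
    and "is_inv_mod (k * m + mm) (k * n + nm) dm"
  shows "((k * l + \<lceil>real_of_int (l * np) / real_of_int n\<rceil> + \<chi>) * dp) mod (k * n + np)
           = ((l * d mod n) + \<chi> * n) mod (k * n + np)
       \<and> ((k * l + \<lfloor>real_of_int (l * nm) / real_of_int n\<rfloor> + \<chi>) * dm) mod (k * n + nm)
           = ((l * d mod n) - \<chi> * n) mod (k * n + nm)"
proof -
  define r where "r = l * d mod n"
  have r_bounds: "0 \<le> r" "r < n" using \<open>0 < n\<close> by (simp_all add: r_def)
  have "[r * m = l] (mod n)"
    using assms(9) unfolding r_def is_inv_mod_def by (blast intro: mod_mult_inverse_solves)
  then obtain t where "r * m = l + t * n"
    by (metis cong_iff_lin cong_sym mult.commute)
  with farey_roots_determinants[OF assms(10)] r_bounds assms(11,12) show ?thesis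
    unfolding r_def[symmetric] is_inv_mod_def
    by (blast intro: mult_inverse_mod_right_root mult_inverse_mod_left_root)
qed

end
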